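(* Let $E$ be a real Banach space and let $\mu$ be a regular Borel probability measure on the compact space $(B_{E^{**}},w^* )$. Define $f_\mu:E^*\to\mathbb R_+$ by $f_\mu(x^* )=\int_{B_{E^{**}}}|x^*(\cdot)|\,d\mu$, where $x^*(x^{**})$ means $x^{**}(x^* )$. Then $f_\mu\in H_0[E]_+$ and $\|f_\mu\|_{FBL[E]}\le 1$.
   Context: For a real Banach space $E$ with dual $E^*$ and closed unit ball $B_E$, let $H[E]$ be the vector space of all positively homogeneous functions $f:E^*\to\mathbb R$ ($f(\lambda x^* )=\lambda f(x^* )$ for $\lambda>0$). For $f\in H[E]$ put $\|f\|_{FBL[E]}:=\sup\{\sum_{k=1}^n|f(x_k^* )| : n\in\mathbb N,\ x_1^*,\dots,x_n^*\in E^*,\ \sup_{x\in B_E}\sum_{k=1}^n|x_k^*(x)|\le 1\}$. $H_0[E]:=\{f\in H[E]:\|f\|_{FBL[E]}<\infty\}$, a Banach lattice with this norm and pointwise order; $H_0[E]_+$ is its positive cone. *)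

theory Defs
  imports "HOL-Probability.Probability"
begin

text \<open>The weak* topology on the closed unit ball of the bidual E** = (E* =>L real) =>L real:
  the weakest topology making all evaluations x** |-> x**(x*) continuous, i.e. the
  pullback of the product topology on (E* => real) along x** |-> blinfun_apply x**,
  restricted to the closed unit ball.\<close>
definition wstar_ball :: "(('a::real_normed_vector \<Rightarrow>\<^sub>L real) \<Rightarrow>\<^sub>L real) topology" where
  "wstar_ball = pullback_topology (cball 0 1) blinfun_apply
      (euclidean :: (('a \<Rightarrow>\<^sub>L real) \<Rightarrow> real) topology)"

definition borel_prob_on :: "'b topology \<Rightarrow> 'b measure \<Rightarrow> bool" where
  "borel_prob_on X M \<longleftrightarrow> prob_space M \<and> space M = topspace X \<and>
     sets M = sigma_sets (topspace X) {U. openin X U}"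

definition regular_on :: "'b topology \<Rightarrow> 'b measure \<Rightarrow> bool" where
  "regular_on X M \<longleftrightarrow> (\<forall>A\<in>sets M.
      emeasure M A = (SUP K\<in>{K. compactin X K \<and> K \<subseteq> A}. emeasure M K) \<and>
      emeasure M A = (INF U\<in>{U. openin X U \<and> A \<subseteq> U}. emeasure M U))"

definition pos_homog :: "(('a::real_normed_vector \<Rightarrow>\<^sub>L real) \<Rightarrow> real) \<Rightarrow> bool" where
  "pos_homog f \<longleftrightarrow> (\<forall>x' (c::real). c > 0 \<longrightarrow> f (c *\<^sub>R x') = c * f x')"

text \<open>The FBL[E] norm (as an extended real; the supremum may be infinite).
  The condition sup over x in B_E of sum_k |x_k*(x)| <= 1 is written out pointwise.\<close>
definition fbl_norm :: "(('a::real_normed_vector \<Rightarrow>\<^sub>L real) \<Rightarrow> real) \<Rightarrow> ereal" where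
  "fbl_norm f = (SUP p\<in>{(n, xs::nat \<Rightarrow> ('a \<Rightarrow>\<^sub>L real)). \<forall>x. norm x \<le> 1 \<longrightarrow>
                         (\<Sum>k<n. \<bar>blinfun_apply (xs k) x\<bar>) \<le> 1}.
                   ereal (\<Sum>k<fst p. \<bar>f (snd p k)\<bar>))"

definition H0 :: "(('a::real_normed_vector \<Rightarrow>\<^sub>L real) \<Rightarrow> real) set" where
  "H0 = {f. pos_homog f \<and> fbl_norm f < \<infinity>}"

definition H0_pos :: "(('a::real_normed_vector \<Rightarrow>\<^sub>L real) \<Rightarrow> real) set" where
  "H0_pos = {f\<in>H0. \<forall>x'. 0 \<le> f x'}"

end

theory Submission imports Defs begin

text \<open>For x** in the unit ball of E** and x_1*, ..., x_n* with sum_k |x_k*(x)| <= 1 on B_E,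
  we have sum_k |x**(x_k*)| = x**(sum_k sgn(x**(x_k*)) x_k*) <= 1, because that signed
  combination has norm at most 1 in E*. Integrating this against a probability measure
  on the ball bounds sum_k |f_mu(x_k*)| by 1.\<close>

lemma sum_abs_blinfun_le_norm:
  fixes xs :: "nat \<Rightarrow> ('a::real_normed_vector \<Rightarrow>\<^sub>L real)"
  assumes ball: "\<forall>x. norm x \<le> 1 \<longrightarrow> (\<Sum>k<n. \<bar>blinfun_apply (xs k) x\<bar>) \<le> 1"
  shows "(\<Sum>k<n. \<bar>blinfun_apply (xs k) x\<bar>) \<le> norm x"
proof (cases "x = 0")
  case True
  then show ?thesis by simp
next
  case False
  define u where "u = (1 / norm x) *\<^sub>R x"
  have norm_u: "norm u \<le> 1" and x_eq: "x = norm x *\<^sub>R u"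
    using False by (simp_all add: u_def)
  have "(\<Sum>k<n. \<bar>blinfun_apply (xs k) x\<bar>) = norm x * (\<Sum>k<n. \<bar>blinfun_apply (xs k) u\<bar>)"
    by (subst x_eq) (simp add: blinfun.scaleR_right abs_mult sum_distrib_left)
  also have "\<dots> \<le> norm x * 1"
    using ball norm_u by (intro mult_left_mono) auto
  finally show ?thesis by simp
qed

lemma sum_abs_bidual_le_one:
  fixes xs :: "nat \<Rightarrow> ('a::real_normed_vector \<Rightarrow>\<^sub>L real)"
    and z :: "('a \<Rightarrow>\<^sub>L real) \<Rightarrow>\<^sub>L real"
  assumes ball: "\<forall>x. norm x \<le> 1 \<longrightarrow> (\<Sum>k<n. \<bar>blinfun_apply (xs k) x\<bar>) \<le> 1"
    and norm_z: "norm z \<le> 1"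
  shows "(\<Sum>k<n. \<bar>blinfun_apply z (xs k)\<bar>) \<le> 1"
proof -
  define s where "s k = sgn (blinfun_apply z (xs k))" for k
  define y where "y = (\<Sum>k<n. s k *\<^sub>R xs k)"
  have z_y: "blinfun_apply z y = (\<Sum>k<n. \<bar>blinfun_apply z (xs k)\<bar>)"
    unfolding y_def s_def
    by (simp add: blinfun.sum_right blinfun.scaleR_right sgn_mult_abs abs_sgn mult.commute)
  have norm_y: "norm y \<le> 1"
  proof (rule norm_blinfun_bound)
    fix x
    have "norm (blinfun_apply y x) = \<bar>\<Sum>k<n. s k * blinfun_apply (xs k) x\<bar>"
      unfolding y_def by (simp add: blinfun.sum_left blinfun.scaleR_left)
    also have "\<dots> \<le> (\<Sum>k<n. \<bar>blinfun_apply (xs k) x\<bar>)"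
      by (rule order_trans[OF sum_abs sum_mono]) (auto simp: s_def abs_mult abs_sgn_eq)
    also have "\<dots> \<le> norm x"
      by (rule sum_abs_blinfun_le_norm[OF ball])
    finally show "norm (blinfun_apply y x) \<le> 1 * norm x" by simp
  qed simp
  have "\<bar>blinfun_apply z y\<bar> \<le> norm z * norm y"
    using norm_blinfun[of z y] by simp
  also have "\<dots> \<le> 1"
    using norm_z norm_y by (simp add: mult_le_one)
  finally show ?thesis using z_y by simp
qed

lemma fbl_norm_le:
  fixes f :: "('a::real_normed_vector \<Rightarrow>\<^sub>L real) \<Rightarrow> real"
  assumes "\<And>(n::nat) xs. \<forall>x. norm x \<le> 1 \<longrightarrow> (\<Sum>k<n. \<bar>blinfun_apply (xs k) x\<bar>) \<le> 1 \<Longrightarrow>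
             (\<Sum>k<n. \<bar>f (xs k)\<bar>) \<le> C"
  shows "fbl_norm f \<le> ereal C"
  unfolding fbl_norm_def using assms by (auto intro!: SUP_least)

lemma borel_measurable_wstar_eval:
  assumes "borel_prob_on wstar_ball M"
  shows "(\<lambda>z. blinfun_apply z x') \<in> borel_measurable M"
proof (rule borel_measurableI)
  fix S :: "real set"
  assume "open S"
  have "continuous_on UNIV (\<lambda>g::('a \<Rightarrow>\<^sub>L real) \<Rightarrow> real. g x')"
    by (rule continuous_on_product_coordinates)
  then have "open ((\<lambda>g::('a \<Rightarrow>\<^sub>L real) \<Rightarrow> real. g x') -` S)"
    using \<open>open S\<close> by (simp add: open_vimage)
  moreover have "space M = cball 0 1"
    using assms by (simp add: borel_prob_on_def wstar_ball_def topspace_pullback_topology)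
  ultimately have "openin wstar_ball ((\<lambda>z. blinfun_apply z x') -` S \<inter> space M)"
    unfolding wstar_ball_def openin_pullback_topology by auto
  then show "(\<lambda>z. blinfun_apply z x') -` S \<inter> space M \<in> sets M"
    using assms by (auto simp: borel_prob_on_def intro: sigma_sets.Basic)
qed

lemma integrable_abs_eval_on_ball:
  fixes M :: "('b::real_normed_vector \<Rightarrow>\<^sub>L real) measure"
  assumes "finite_measure M" and "space M \<subseteq> cball 0 1"
    and "(\<lambda>z. blinfun_apply z x) \<in> borel_measurable M"
  shows "integrable M (\<lambda>z. \<bar>blinfun_apply z x\<bar>)"
proof (rule finite_measure.integrable_const_bound[where B="norm x"])
  show "AE z in M. norm \<bar>blinfun_apply z x\<bar> \<le> norm x"
  proof (rule AE_I2)
    fix z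
    assume "z \<in> space M"
    then have "norm z \<le> 1"
      using assms(2) by auto
    then have "norm z * norm x \<le> norm x"
      by (simp add: mult_left_le_one_le)
    then show "norm \<bar>blinfun_apply z x\<bar> \<le> norm x"
      using norm_blinfun[of z x] by simp
  qed
qed (use assms in auto)

lemma pos_homog_integral_abs_eval:
  "pos_homog (\<lambda>x'. \<integral>z. \<bar>blinfun_apply z x'\<bar> \<partial>M)"
  by (auto simp: pos_homog_def blinfun.scaleR_right abs_mult)

lemma fbl_norm_integral_abs_eval_le_one:
  fixes M :: "(('a::real_normed_vector \<Rightarrow>\<^sub>L real) \<Rightarrow>\<^sub>L real) measure"
  assumes "prob_space M" and space: "space M \<subseteq> cball 0 1"
    and meas: "\<And>x'. (\<lambda>z. blinfun_apply z x') \<in> borel_measurable M"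
  shows "fbl_norm (\<lambda>x'. \<integral>z. \<bar>blinfun_apply z x'\<bar> \<partial>M) \<le> 1"
proof -
  interpret prob_space M by fact
  have intg: "integrable M (\<lambda>z. \<bar>blinfun_apply z x'\<bar>)" for x'
    using space meas by (intro integrable_abs_eval_on_ball) unfold_locales
  have norm_le: "norm z \<le> 1" if "z \<in> space M" for z
    using space that by auto
  have "(\<Sum>k<n. \<bar>\<integral>z. \<bar>blinfun_apply z (xs k)\<bar> \<partial>M\<bar>) \<le> 1"
    if ball: "\<forall>x. norm x \<le> 1 \<longrightarrow> (\<Sum>k<n. \<bar>blinfun_apply (xs k) x\<bar>) \<le> 1" for n :: nat and xs
  proof -
    have "(\<Sum>k<n. \<bar>\<integral>z. \<bar>blinfun_apply z (xs k)\<bar> \<partial>M\<bar>)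
          = (\<integral>z. (\<Sum>k<n. \<bar>blinfun_apply z (xs k)\<bar>) \<partial>M)"
      by (simp add: integral_sum intg)
    also have "\<dots> \<le> (\<integral>z. 1 \<partial>M)"
      by (intro integral_mono) (auto intro: intg norm_le sum_abs_bidual_le_one[OF ball])
    also have "\<dots> = 1"
      by (simp add: prob_space)
    finally show ?thesis .
  qed
  then have "fbl_norm (\<lambda>x'. \<integral>z. \<bar>blinfun_apply z x'\<bar> \<partial>M) \<le> ereal 1"
    by (rule fbl_norm_le)
  then show ?thesis
    by (simp add: one_ereal_def)
qed

theorem proposition2p11:
  fixes \<mu> :: "(('a::banach \<Rightarrow>\<^sub>L real) \<Rightarrow>\<^sub>L real) measure"
    and f :: "('a \<Rightarrow>\<^sub>L real) \<Rightarrow> real"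
  assumes "borel_prob_on wstar_ball \<mu>"
    and "regular_on wstar_ball \<mu>"
    and "f = (\<lambda>x'. \<integral>x''. \<bar>blinfun_apply x'' x'\<bar> \<partial>\<mu>)"
  shows "f \<in> H0_pos \<and> fbl_norm f \<le> 1"
proof -
  have "prob_space \<mu>" and "space \<mu> \<subseteq> cball 0 1"
    using assms(1) by (auto simp: borel_prob_on_def wstar_ball_def topspace_pullback_topology)
  then have norm_le: "fbl_norm f \<le> 1"
    unfolding assms(3)
    by (intro fbl_norm_integral_abs_eval_le_one borel_measurable_wstar_eval[OF assms(1)])
  then have "fbl_norm f < \<infinity>"
    by (auto simp: le_less_trans)
  moreover have "pos_homog f" and "\<forall>x'. 0 \<le> f x'"
    unfolding assms(3) by (simp_all add: pos_homog_integral_abs_eval)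
  ultimately show ?thesis
    using norm_le unfolding H0_pos_def H0_def by auto
qed

end
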